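(* Let $\mathcal{G}$ be any grouped weight partition of $\mathbb{F}_q^k$ and $t$ a positive integer. Then $$r_{\mathcal{G}}(k,t)=N\big(\mathcal{D}_{\mathcal{G}}(t;u_0,u_1,\ldots,u_k)\big),\qquad u_i=(\underbrace{1,\ldots,1}_{i},0,\ldots,0),\ i=0,\ldots,k.$$
   Context: Let $W_i=\{u\in\mathbb{F}_q^k:\mathrm{wt}(u)=i\}$ (Hamming weight). A grouped weight partition is a partition $\mathcal{G}=\{G_1,\ldots,G_m\}$ of $\mathbb{F}_q^k$ with $G_j=\bigcup_{i\in S_j}W_i$, where $S_1,\ldots,S_m$ form a partition of $\{0,\ldots,k\}$. A $(\mathcal{P},t)$-encoding with redundancy $r$ is a systematic map $\mathcal{C}:\mathbb{F}_q^k\to\mathbb{F}_q^{k+r}$, $\mathcal{C}(u)=(u,p(u))$, with Hamming distance $d(\mathcal{C}(u),\mathcal{C}(v))\ge 2t+1$ whenever $u,v$ lie in different blocks; $r_{\mathcal{P}}(k,t)$ is the minimum such $r$. For distinct $u_1,\ldots,u_M$, $\mathcal{D}_{\mathcal{P}}(t;u_1,\ldots,u_M)$ is the $M\times M$ matrix with $(i,j)$ entry $\max(2t+1-d(u_i,u_j),0)$ if $u_i,u_j$ lie in different blocks of $\mathcal{P}$ and $0$ otherwise. For $D\in\mathbb{N}^{M\times M}$, $N(D)$ is the smallest $r\ge0$ such that there exist $z_1,\ldots,z_M\in\mathbb{F}_q^r$ with $d(z_i,z_j)\ge D_{i,j}$ for all $i\ne j$. *)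

theory Defs
  imports Main "HOL-Library.Disjoint_Sets"
begin

definition hdist :: "'a list \<Rightarrow> 'a list \<Rightarrow> nat" where
  "hdist xs ys = card {i. i < length xs \<and> xs ! i \<noteq> ys ! i}"

definition wt :: "'a::zero list \<Rightarrow> nat" where
  "wt u = card {i. i < length u \<and> u ! i \<noteq> 0}"

text \<open>The grouped weight partition of F_q^k induced by a partition S of {0..k}:
  blocks G_j = union of W_i for i in S_j.\<close>
definition gw_partition :: "'a itself \<Rightarrow> nat \<Rightarrow> nat set set \<Rightarrow> ('a::zero list) set set" where
  "gw_partition _ k S = (\<lambda>s. {u. length u = k \<and> wt u \<in> s}) ` S"

definition different_blocks :: "'a set set \<Rightarrow> 'a \<Rightarrow> 'a \<Rightarrow> bool" where
  "different_blocks P u v = (\<exists>B\<in>P. \<exists>B'\<in>P. B \<noteq> B' \<and> u \<in> B \<and> v \<in> B')"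

definition is_encoding :: "'a list set set \<Rightarrow> nat \<Rightarrow> nat \<Rightarrow> nat \<Rightarrow> ('a list \<Rightarrow> 'a list) \<Rightarrow> bool" where
  "is_encoding P k t r p =
     ((\<forall>u. length u = k \<longrightarrow> length (p u) = r) \<and>
      (\<forall>u v. length u = k \<longrightarrow> length v = k \<longrightarrow> different_blocks P u v \<longrightarrow>
          hdist (u @ p u) (v @ p v) \<ge> 2 * t + 1))"

definition r_opt :: "'a list set set \<Rightarrow> nat \<Rightarrow> nat \<Rightarrow> nat" where
  "r_opt P k t = (LEAST r. \<exists>p. is_encoding P k t r p)"

text \<open>The M x M matrix D_P(t; u_0..u_{M-1}), indices 0..M-1; nat subtraction
  truncates at 0, giving max(2t+1-d,0).\<close>
definition Dmat :: "'a list set set \<Rightarrow> nat \<Rightarrow> (nat \<Rightarrow> 'a list) \<Rightarrow> nat \<Rightarrow> nat \<Rightarrow> nat" where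
  "Dmat P t us i j = (if different_blocks P (us i) (us j) then (2 * t + 1) - hdist (us i) (us j) else 0)"

definition N_min :: "'a itself \<Rightarrow> nat \<Rightarrow> (nat \<Rightarrow> nat \<Rightarrow> nat) \<Rightarrow> nat" where
  "N_min _ M D = (LEAST r. \<exists>z :: nat \<Rightarrow> 'a list.
      (\<forall>i<M. length (z i) = r) \<and>
      (\<forall>i<M. \<forall>j<M. i \<noteq> j \<longrightarrow> hdist (z i) (z j) \<ge> D i j))"

definition unit_prefix :: "nat \<Rightarrow> nat \<Rightarrow> 'a::{zero,one} list" where
  "unit_prefix k i = replicate i 1 @ replicate (k - i) 0"

end

theory Submission
  imports Defs
begin

text \<open>Whether u and v must be separated depends only on their weights, and
  d(u, v) \<ge> |wt u - wt v| = d(u_(wt u), u_(wt v)). Hence redundancies z_i for the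
  k + 1 representatives u_i already give the encoding u \<mapsto> (u, z_(wt u)) of all
  of F_q^k, while conversely every encoding restricts to a solution of the
  distance problem for the u_i.\<close>

lemma hdist_append:
  assumes "length a = length c" "length b = length d"
  shows "hdist (a @ b) (c @ d) = hdist a c + hdist b d"
proof -
  let ?A = "{i. i < length a \<and> a ! i \<noteq> c ! i}"
  let ?B = "{i. i < length b \<and> b ! i \<noteq> d ! i}"
  have "{i. i < length (a @ b) \<and> (a @ b) ! i \<noteq> (c @ d) ! i} = ?A \<union> (\<lambda>i. i + length a) ` ?B"
  proof (rule set_eqI)
    fix i
    show "i \<in> {i. i < length (a @ b) \<and> (a @ b) ! i \<noteq> (c @ d) ! i} \<longleftrightarrow> i \<in> ?A \<union> (\<lambda>i. i + length a) ` ?B"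
    proof (cases "i < length a")
      case True
      then show ?thesis using assms by (auto simp: nth_append)
    next
      case False
      then have "i = (i - length a) + length a" by simp
      then show ?thesis using False assms
        by (auto simp: nth_append image_iff intro!: exI[of _ "i - length a"])
    qed
  qed
  moreover have "card (?A \<union> (\<lambda>i. i + length a) ` ?B) = card ?A + card ?B"
    by (subst card_Un_disjoint) (auto simp: card_image inj_on_def)
  ultimately show ?thesis
    unfolding hdist_def by simp
qed

lemma hdist_commute: "length u = length v \<Longrightarrow> hdist u v = hdist v u"
  unfolding hdist_def by metis

lemma wt_le_length: "wt u \<le> length u"
  unfolding wt_def by (rule order.trans[OF card_mono[of "{..<length u}"]]) auto

lemma wt_le_wt_add_hdist:
  assumes "length u = length v"
  shows "wt u \<le> wt v + hdist u v"
proof -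
  have "{i. i < length u \<and> u ! i \<noteq> 0} \<subseteq>
        {i. i < length v \<and> v ! i \<noteq> 0} \<union> {i. i < length u \<and> u ! i \<noteq> v ! i}"
    using assms by auto
  then have "wt u \<le> card ({i. i < length v \<and> v ! i \<noteq> 0} \<union> {i. i < length u \<and> u ! i \<noteq> v ! i})"
    unfolding wt_def by (intro card_mono) auto
  also have "\<dots> \<le> wt v + hdist u v"
    unfolding wt_def hdist_def by (rule card_Un_le)
  finally show ?thesis .
qed

lemma wt_diff_le_hdist:
  assumes "length u = length v"
  shows "(wt u - wt v) + (wt v - wt u) \<le> hdist u v"
  using wt_le_wt_add_hdist[OF assms] wt_le_wt_add_hdist[OF assms[symmetric]]
  by (simp add: hdist_commute[OF assms])

lemma length_unit_prefix [simp]: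
  "i \<le> k \<Longrightarrow> length (unit_prefix k i) = k"
  unfolding unit_prefix_def by simp

lemma nth_unit_prefix:
  "i \<le> k \<Longrightarrow> n < k \<Longrightarrow> unit_prefix k i ! n = (if n < i then 1 else 0)"
  unfolding unit_prefix_def by (auto simp: nth_append)

lemma wt_unit_prefix [simp]:
  assumes "i \<le> k"
  shows "wt (unit_prefix k i :: 'a::zero_neq_one list) = i"
proof -
  have "{n. n < length (unit_prefix k i :: 'a list) \<and> (unit_prefix k i :: 'a list) ! n \<noteq> 0} = {..<i}"
    using assms by (auto simp: nth_unit_prefix split: if_splits)
  then show ?thesis
    unfolding wt_def by simp
qed

lemma hdist_unit_prefix:
  assumes "i \<le> k" "j \<le> k"
  shows "hdist (unit_prefix k i :: 'a::zero_neq_one list) (unit_prefix k j) = (i - j) + (j - i)"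
proof -
  have "{n. n < length (unit_prefix k i :: 'a list) \<and>
            (unit_prefix k i :: 'a list) ! n \<noteq> unit_prefix k j ! n} = {min i j..<max i j}"
    using assms by (auto simp: nth_unit_prefix split: if_splits)
  then show ?thesis
    unfolding hdist_def by simp
qed

lemma hdist_unit_prefix_wt_le_hdist:
  assumes "length u = k" "length v = k"
  shows "hdist (unit_prefix k (wt u) :: 'a::zero_neq_one list) (unit_prefix k (wt v)) \<le> hdist u v"
  using assms wt_le_length[of u] wt_le_length[of v]
  by (simp add: hdist_unit_prefix wt_diff_le_hdist)

lemma different_blocks_gw_partition_iff:
  assumes "disjoint S" "length u = k" "length v = k"
  shows "different_blocks (gw_partition TYPE('a::zero) k S) u v \<longleftrightarrow>
         (\<exists>s\<in>S. \<exists>s'\<in>S. s \<noteq> s' \<and> wt u \<in> s \<and> wt v \<in> s')"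
proof
  assume "different_blocks (gw_partition TYPE('a) k S) u v"
  then obtain s s' where "s \<in> S" "s' \<in> S" "wt u \<in> s" "wt v \<in> s'"
    and blocks_neq: "{w :: 'a list. length w = k \<and> wt w \<in> s} \<noteq> {w. length w = k \<and> wt w \<in> s'}"
    unfolding different_blocks_def gw_partition_def by auto
  moreover have "s \<noteq> s'"
    using blocks_neq by auto
  ultimately show "\<exists>s\<in>S. \<exists>s'\<in>S. s \<noteq> s' \<and> wt u \<in> s \<and> wt v \<in> s'"
    by blast
next
  assume "\<exists>s\<in>S. \<exists>s'\<in>S. s \<noteq> s' \<and> wt u \<in> s \<and> wt v \<in> s'"
  then obtain s s' where "s \<in> S" "s' \<in> S" "s \<noteq> s'" "wt u \<in> s" "wt v \<in> s'"
    by blast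
  moreover from this have "wt u \<notin> s'"
    using disjointD[OF \<open>disjoint S\<close>] by blast
  ultimately show "different_blocks (gw_partition TYPE('a) k S) u v"
    unfolding different_blocks_def gw_partition_def
    by (intro bexI[of _ "{w. length w = k \<and> wt w \<in> s}"] bexI[of _ "{w. length w = k \<and> wt w \<in> s'}"])
      (use assms(2,3) in auto)
qed

corollary different_blocks_gw_partition_unit_prefix_wt:
  assumes "disjoint S" "length u = k" "length v = k"
  shows "different_blocks (gw_partition TYPE('a::zero_neq_one) k S) u v \<longleftrightarrow>
         different_blocks (gw_partition TYPE('a) k S)
           (unit_prefix k (wt u) :: 'a list) (unit_prefix k (wt v))"
  using assms wt_le_length[of u] wt_le_length[of v]
  by (simp add: different_blocks_gw_partition_iff)

lemma different_blocks_gw_partition_wt_neq: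
  assumes "disjoint S" "length u = k" "length v = k"
    and "different_blocks (gw_partition TYPE('a::zero) k S) u v"
  shows "wt u \<noteq> wt v"
proof -
  obtain s s' where "s \<in> S" "s' \<in> S" "s \<noteq> s'" "wt u \<in> s" "wt v \<in> s'"
    using assms(4) different_blocks_gw_partition_iff[OF assms(1-3)] by blast
  moreover have "s \<inter> s' = {}"
    using disjointD[OF \<open>disjoint S\<close>] calculation by simp
  ultimately show ?thesis
    by auto
qed

lemma is_encoding_hdist_redundancy:
  assumes "is_encoding P k t r p" "length u = k" "length v = k" "different_blocks P u v"
  shows "2 * t + 1 - hdist u v \<le> hdist (p u) (p v)"
proof -
  have "length (p u) = length (p v)"
    using assms(1-3) unfolding is_encoding_def by simp
  then have "2 * t + 1 \<le> hdist u v + hdist (p u) (p v)"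
    using assms hdist_append[of u v "p u" "p v"] unfolding is_encoding_def by metis
  then show ?thesis by simp
qed

lemma is_encoding_restrict_Dmat:
  assumes "is_encoding P k t r p" "\<And>i. i < M \<Longrightarrow> length (us i) = k"
  shows "(\<forall>i<M. length (p (us i)) = r) \<and>
         (\<forall>i<M. \<forall>j<M. i \<noteq> j \<longrightarrow> hdist (p (us i)) (p (us j)) \<ge> Dmat P t us i j)"
  using assms is_encoding_hdist_redundancy[OF assms(1)]
  unfolding Dmat_def by (auto simp: is_encoding_def)

lemma is_encoding_gw_partition_wt:
  fixes z :: "nat \<Rightarrow> 'a::zero_neq_one list" and S :: "nat set set" and k :: nat
  defines "P \<equiv> gw_partition TYPE('a) k S"
  assumes "disjoint S"
    and length_z: "\<And>i. i \<le> k \<Longrightarrow> length (z i) = r"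
    and hdist_z: "\<And>i j. i \<le> k \<Longrightarrow> j \<le> k \<Longrightarrow> i \<noteq> j \<Longrightarrow>
       hdist (z i) (z j) \<ge> Dmat P t (\<lambda>i. unit_prefix k i :: 'a list) i j"
  shows "is_encoding P k t r (\<lambda>u. z (wt u))"
  unfolding is_encoding_def
proof (intro conjI allI impI)
  fix u :: "'a list"
  assume "length u = k"
  then show "length (z (wt u)) = r"
    using length_z wt_le_length[of u] by simp
next
  fix u v :: "'a list"
  assume u: "length u = k" and v: "length v = k" and uv: "different_blocks P u v"
  let ?u' = "unit_prefix k (wt u) :: 'a list" and ?v' = "unit_prefix k (wt v) :: 'a list"
  have weights: "wt u \<le> k" "wt v \<le> k"
    using u v wt_le_length by metis+
  have "different_blocks P ?u' ?v'"
    using uv different_blocks_gw_partition_unit_prefix_wt[OF \<open>disjoint S\<close> u v] by (simp add: P_def)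
  moreover have "wt u \<noteq> wt v"
    using uv different_blocks_gw_partition_wt_neq[OF \<open>disjoint S\<close> u v] by (simp add: P_def)
  ultimately have "2 * t + 1 - hdist ?u' ?v' \<le> hdist (z (wt u)) (z (wt v))"
    using hdist_z[OF weights] unfolding Dmat_def by simp
  moreover have "hdist ?u' ?v' \<le> hdist u v"
    using hdist_unit_prefix_wt_le_hdist[OF u v] .
  moreover have "length (z (wt u)) = length (z (wt v))"
    using length_z weights by simp
  ultimately show "2 * t + 1 \<le> hdist (u @ z (wt u)) (v @ z (wt v))"
    using u v hdist_append[of u v "z (wt u)" "z (wt v)"] by simp
qed

lemma ex_encoding_gw_partition_iff:
  fixes S :: "nat set set" and k :: nat
  defines "P \<equiv> gw_partition TYPE('a::zero_neq_one) k S"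
  assumes "disjoint S"
  shows "(\<exists>p. is_encoding P k t r p) \<longleftrightarrow>
    (\<exists>z :: nat \<Rightarrow> 'a list. (\<forall>i<k+1. length (z i) = r) \<and>
      (\<forall>i<k+1. \<forall>j<k+1. i \<noteq> j \<longrightarrow> hdist (z i) (z j) \<ge> Dmat P t (\<lambda>i. unit_prefix k i) i j))"
    (is "_ \<longleftrightarrow> (\<exists>z. ?solves z)")
proof
  assume "\<exists>p. is_encoding P k t r p"
  then obtain p where "is_encoding P k t r p" by blast
  then have "?solves (\<lambda>i. p (unit_prefix k i))"
    by (rule is_encoding_restrict_Dmat[where us = "unit_prefix k"]) simp
  then show "\<exists>z. ?solves z" by (rule exI[of _ "\<lambda>i. p (unit_prefix k i)"])
next
  assume "\<exists>z. ?solves z"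
  then obtain z :: "nat \<Rightarrow> 'a list" where length_z: "\<forall>i<k+1. length (z i) = r"
    and hdist_z: "\<forall>i<k+1. \<forall>j<k+1. i \<noteq> j \<longrightarrow> hdist (z i) (z j) \<ge> Dmat P t (\<lambda>i. unit_prefix k i) i j"
    by blast
  have "is_encoding P k t r (\<lambda>u. z (wt u))"
    unfolding P_def
  proof (rule is_encoding_gw_partition_wt[OF \<open>disjoint S\<close>])
    show "length (z i) = r" if "i \<le> k" for i
      using length_z that by simp
    show "Dmat (gw_partition TYPE('a) k S) t (unit_prefix k) i j \<le> hdist (z i) (z j)"
      if "i \<le> k" "j \<le> k" "i \<noteq> j" for i j
      using hdist_z that unfolding P_def by simp
  qed
  then show "\<exists>p. is_encoding P k t r p" by blast
qed

theorem corollary9: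
  fixes S :: "nat set set" and k t :: nat
  assumes "partition_on {0..k} S"
    and "t > 0"
  shows "r_opt (gw_partition TYPE('a::{finite,field}) k S) k t =
         N_min TYPE('a) (k + 1)
           (Dmat (gw_partition TYPE('a) k S) t (\<lambda>i. unit_prefix k i :: 'a list))"
proof -
  have "disjoint S"
    using assms(1) by (rule partition_onD2)
  then show ?thesis
    unfolding r_opt_def N_min_def by (simp add: ex_encoding_gw_partition_iff)
qed

end
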